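(* Assume $A$ is good. If $w\in\Sigma$ satisfies $I^*(w)<\infty$, then there exists $k\ge0$ with $\sigma^k(w)\in M$, i.e. $w$ is in a preimage of the support of the maximizing probability of $A^*$.
   Context: $\Sigma=\{0,1\}^{\mathbb N}$ with metric $d(u,v)=2^{-n}$, $n$ the first index of disagreement; $\sigma$ is the shift. $A^*:\Sigma\to\mathbb R$ is a Hölder potential (the dual potential of a Hölder $A$ via an involution kernel) with $m(A^* )=\max\{\int A^*d\nu:\nu \text{ $\sigma$-invariant}\}=0$; assume its maximizing probability $\mu^*_\infty$ is unique and supported on a single periodic orbit $M$ of $\sigma$. $V^*$ is a calibrated subaction for $A^*$: $V^*(w)=\max_{\sigma u=w}[V^*(u)+A^*(u)]$; $R^*(w)=V^*(\sigma w)-V^*(w)-A^*(w)\ge0$ and $I^*(w)=\sum_{n\ge0}R^*(\sigma^nw)\in[0,\infty]$. It is known (used here) that if $I^*(w)<\infty$ then $\frac1n\sum_{j<n}\delta_{\sigma^jw}\to\mu^*_\infty$ weakly. Let $P=\{w\notin M:\sigma(w)\in M\}$; $A$ is good if $R^*(w)>0$ for all $w\in P$. *)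

theory Defs
  imports "HOL-Analysis.Analysis" "HOL-Probability.Probability"
begin

text \<open>The full shift \<Sigma> = {0,1}^\<nat> is the type nat \<Rightarrow> bool with the product
  topology (bool is discrete), which is the topology of the metric d below.\<close>

type_synonym seq = "nat \<Rightarrow> bool"

definition shift :: "seq \<Rightarrow> seq" where
  "shift w = (\<lambda>n. w (Suc n))"

definition dist_sh :: "seq \<Rightarrow> seq \<Rightarrow> real" where
  "dist_sh u v = (if u = v then 0 else (1/2) ^ (LEAST n. u n \<noteq> v n))"

definition holder :: "(seq \<Rightarrow> real) \<Rightarrow> bool" where
  "holder f \<longleftrightarrow> (\<exists>C \<alpha>. \<alpha> > 0 \<and> (\<forall>u v. \<bar>f u - f v\<bar> \<le> C * dist_sh u v powr \<alpha>))"

definition invariant_prob :: "seq measure \<Rightarrow> bool" where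
  "invariant_prob \<nu> \<longleftrightarrow> prob_space \<nu> \<and> sets \<nu> = sets borel \<and>
     (\<forall>B \<in> sets borel. emeasure \<nu> (shift -` B) = emeasure \<nu> B)"

text \<open>m(f) = max of the integrals of f over invariant probabilities
  (the supremum, which is attained).\<close>
definition mval :: "(seq \<Rightarrow> real) \<Rightarrow> real" where
  "mval f = (SUP \<nu> \<in> {\<nu>. invariant_prob \<nu>}. integral\<^sup>L \<nu> f)"

definition maximizing :: "(seq \<Rightarrow> real) \<Rightarrow> seq measure \<Rightarrow> bool" where
  "maximizing f \<mu> \<longleftrightarrow> invariant_prob \<mu> \<and> integral\<^sup>L \<mu> f = mval f"

definition periodic_orbit :: "seq set \<Rightarrow> bool" where
  "periodic_orbit Mo \<longleftrightarrow> (\<exists>p n. n \<ge> 1 \<and> (shift ^^ n) p = p \<and>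
     Mo = {(shift ^^ j) p | j. j < n})"

definition calibrated_subaction :: "(seq \<Rightarrow> real) \<Rightarrow> (seq \<Rightarrow> real) \<Rightarrow> bool" where
  "calibrated_subaction f V \<longleftrightarrow>
     (\<forall>w. V w = Max {V u + f u | u. shift u = w})"

definition Rfun :: "(seq \<Rightarrow> real) \<Rightarrow> (seq \<Rightarrow> real) \<Rightarrow> seq \<Rightarrow> real" where
  "Rfun f V w = V (shift w) - V w - f w"

definition Ifun :: "(seq \<Rightarrow> real) \<Rightarrow> (seq \<Rightarrow> real) \<Rightarrow> seq \<Rightarrow> ennreal" where
  "Ifun f V w = (\<Sum>n. ennreal (Rfun f V ((shift ^^ n) w)))"

definition empirical_converges :: "seq \<Rightarrow> seq measure \<Rightarrow> bool" where
  "empirical_converges w \<mu> \<longleftrightarrow>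
     (\<forall>g :: seq \<Rightarrow> real. continuous_on UNIV g \<longrightarrow>
        (\<lambda>n. (\<Sum>j<n. g ((shift ^^ j) w)) / real n) \<longlonglongrightarrow> integral\<^sup>L \<mu> g)"

end

theory Submission
  imports Defs
begin

text \<open>
  Let \<open>near N M\<close> be the union of the length-\<open>N\<close> cylinders
  around the points of the periodic orbit \<open>M\<close>, a clopen neighbourhood of \<open>M\<close>.
  Since \<open>I*(w) < \<infinity>\<close>, \<open>R*(\<sigma>\<^sup>j w) \<rightarrow> 0\<close>.  The set \<open>P\<close> of preimages of \<open>M\<close> outside
  \<open>M\<close> is finite and \<open>R*\<close> is continuous, so goodness gives \<open>\<delta> > 0\<close> with
  \<open>R* \<ge> \<delta>\<close> on a cylinder neighbourhood of \<open>P\<close>.  An orbit can only enter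
  \<open>near N M\<close> through that neighbourhood, hence after some time \<open>J\<close> the orbit of
  \<open>w\<close> never enters \<open>near N M\<close>.  But its empirical measures converge to \<open>\<mu>\<close>,
  which gives full mass to the clopen set \<open>near N M\<close>, so it visits that set
  infinitely often; thus \<open>\<sigma>\<^sup>k w \<in> near N M\<close> for all \<open>k \<ge> J\<close>.  Points of \<open>M\<close> are
  determined by their first \<open>n\<close> symbols (\<open>n\<close> the period), so an orbit shadowing
  \<open>M\<close> that closely lies on \<open>M\<close>: \<open>\<sigma>\<^sup>J w \<in> M\<close>.
\<close>

section \<open>Cylinders and the topology of the shift space\<close>

definition cylinder :: "nat \<Rightarrow> seq \<Rightarrow> seq set" where
  "cylinder N x = {y. \<forall>i<N. y i = x i}"

lemma cylinder_antimono: "M \<le> N \<Longrightarrow> cylinder N x \<subseteq> cylinder M x"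
  by (auto simp: cylinder_def)

lemma shift_cylinder: "y \<in> cylinder (Suc N) x \<Longrightarrow> shift y \<in> cylinder N (shift x)"
  by (auto simp: cylinder_def shift_def)

lemma iter_shift: "(shift ^^ k) x = (\<lambda>i. x (k + i))"
  by (induction k arbitrary: x) (auto simp: shift_def)

lemma open_iff_cylinders: "open (S :: seq set) \<longleftrightarrow> (\<forall>x\<in>S. \<exists>N. cylinder N x \<subseteq> S)"
  unfolding open_fun_def openin_product_topology_alt
proof (intro iffI ballI)
  fix x assume "x \<in> S" and
    "\<forall>x\<in>S. \<exists>U. finite {i \<in> UNIV. U i \<noteq> topspace euclidean} \<and>
       (\<forall>i\<in>UNIV. openin euclidean (U i)) \<and> x \<in> Pi\<^sub>E UNIV U \<and> Pi\<^sub>E UNIV U \<subseteq> S"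
  then obtain U where U: "finite {i. U i \<noteq> UNIV}" "x \<in> Pi\<^sub>E UNIV U" "Pi\<^sub>E UNIV U \<subseteq> S"
    by auto
  then obtain N where N: "\<And>i. U i \<noteq> UNIV \<Longrightarrow> i < N"
    using finite_nat_set_iff_bounded by auto
  have "cylinder N x \<subseteq> Pi\<^sub>E UNIV U"
  proof
    fix y assume "y \<in> cylinder N x"
    then have "y i \<in> U i" for i
      using U(2) N[of i] by (cases "i < N") (auto simp: cylinder_def)
    then show "y \<in> Pi\<^sub>E UNIV U" by auto
  qed
  with U(3) show "\<exists>N. cylinder N x \<subseteq> S" by blast
next
  fix x assume "x \<in> S" and "\<forall>x\<in>S. \<exists>N. cylinder N x \<subseteq> S"
  then obtain N where N: "cylinder N x \<subseteq> S" by blast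
  define U where "U = (\<lambda>i. if i < N then {x i} else (UNIV :: bool set))"
  have "finite {i \<in> UNIV. U i \<noteq> topspace euclidean}"
    by (rule finite_subset[of _ "{..<N}"]) (auto simp: U_def)
  moreover have "Pi\<^sub>E UNIV U \<subseteq> cylinder N x"
  proof
    fix y assume "y \<in> Pi\<^sub>E UNIV U"
    then have "y i \<in> U i" for i by (auto simp: PiE_def)
    then have "y i = x i" if "i < N" for i using that by (metis U_def singletonD)
    then show "y \<in> cylinder N x" by (simp add: cylinder_def)
  qed
  moreover have "\<forall>i\<in>UNIV. openin euclidean (U i)"
    by (simp add: open_openin[symmetric] discrete_topology_class.open_discrete)
  moreover have "x \<in> Pi\<^sub>E UNIV U" by (auto simp: U_def)
  ultimately show "\<exists>U. finite {i \<in> UNIV. U i \<noteq> topspace euclidean} \<and>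
      (\<forall>i\<in>UNIV. openin euclidean (U i)) \<and> x \<in> Pi\<^sub>E UNIV U \<and> Pi\<^sub>E UNIV U \<subseteq> S"
    using N by blast
qed

lemma open_cylinder: "open (cylinder N x)"
  unfolding open_iff_cylinders by (auto simp: cylinder_def)

lemma continuous_shift: "continuous_on UNIV shift"
  unfolding shift_def by (intro continuous_on_coordinatewise_then_product) simp

text \<open>A clopen set has a continuous indicator function; this is the test function
  fed to the weak convergence of the empirical measures.\<close>
lemma continuous_indicator_clopen:
  assumes "open S" "closed S"
  shows "continuous_on UNIV (indicator S :: seq \<Rightarrow> real)"
proof (subst continuous_on_open_vimage[OF open_UNIV], intro allI impI)
  fix B :: "real set" assume "open B"
  have "indicator S -` B = (if 1 \<in> B then S else {}) \<union> (if 0 \<in> B then - S else {})"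
    by (auto simp: indicator_def of_bool_def split: if_splits)
  then show "open (indicator S -` B \<inter> UNIV)"
    using assms by (auto simp: open_Compl)
qed

section \<open>Continuity of the potential and of \<open>R\<close>\<close>

lemma dist_sh_cylinder: "y \<in> cylinder N x \<Longrightarrow> dist_sh y x \<le> (1/2) ^ N"
proof (cases "y = x")
  case False
  assume y: "y \<in> cylinder N x"
  obtain i where "y i \<noteq> x i" using False by auto
  then have least: "y (LEAST n. y n \<noteq> x n) \<noteq> x (LEAST n. y n \<noteq> x n)" by (rule LeastI)
  have "N \<le> (LEAST n. y n \<noteq> x n)"
  proof (rule ccontr)
    assume "\<not> N \<le> (LEAST n. y n \<noteq> x n)"
    with y least show False by (simp add: cylinder_def)
  qed
  then show ?thesis
    using False by (simp add: dist_sh_def power_decreasing)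
qed (simp add: dist_sh_def)

text \<open>Holder functions on the shift space are continuous: on a cylinder of length
  \<open>N\<close> they oscillate by at most \<open>C (2\<^sup>-\<^sup>\<alpha>)\<^sup>N\<close>.\<close>
lemma holder_continuous:
  assumes "holder f"
  shows "continuous_on UNIV f"
proof -
  obtain C \<alpha> where \<alpha>: "\<alpha> > 0" and C: "\<And>u v. \<bar>f u - f v\<bar> \<le> C * dist_sh u v powr \<alpha>"
    using assms unfolding holder_def by blast
  define r where "r = (1/2::real) powr \<alpha>"
  have r: "0 < r" "r < 1" using \<alpha> powr_less_mono2[of \<alpha> "1/2" 1] by (auto simp: r_def)
  have oscillation: "\<bar>f y - f x\<bar> \<le> max C 0 * r ^ N" if "y \<in> cylinder N x" for x y N
  proof -
    have "dist_sh y x powr \<alpha> \<le> ((1/2) ^ N) powr \<alpha>"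
      using dist_sh_cylinder[OF that] \<alpha> by (intro powr_mono2) (auto simp: dist_sh_def)
    also have "\<dots> = r ^ N"
      by (simp add: r_def powr_realpow[symmetric] powr_powr mult.commute)
    finally have "dist_sh y x powr \<alpha> \<le> r ^ N" .
    then have "C * dist_sh y x powr \<alpha> \<le> max C 0 * r ^ N"
      by (meson max.cobounded1 max.cobounded2 mult_mono order_trans powr_ge_zero
          mult_right_mono)
    with C show ?thesis by (rule order_trans)
  qed
  have "open (f -` B)" if "open B" for B
    unfolding open_iff_cylinders
  proof
    fix x assume "x \<in> f -` B"
    then obtain \<epsilon> where \<epsilon>: "\<epsilon> > 0" "ball (f x) \<epsilon> \<subseteq> B"
      using \<open>open B\<close> open_contains_ball by blast
    have "(\<lambda>N. max C 0 * r ^ N) \<longlonglongrightarrow> max C 0 * 0"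
      using r by (intro tendsto_intros LIMSEQ_power_zero) auto
    then have "eventually (\<lambda>N. max C 0 * r ^ N < \<epsilon>) sequentially"
      using \<epsilon>(1) by (auto simp: order_tendsto_iff)
    then obtain N where "max C 0 * r ^ N < \<epsilon>"
      by (meson eventually_sequentially order_refl)
    then have "cylinder N x \<subseteq> f -` ball (f x) \<epsilon>"
      using oscillation by (force simp: dist_real_def abs_minus_commute)
    with \<epsilon>(2) show "\<exists>N. cylinder N x \<subseteq> f -` B" by blast
  qed
  then show ?thesis by (simp add: continuous_on_open_vimage)
qed

text \<open>The cost \<open>R = V \<circ> \<sigma> - V - A\<close> is continuous; this is what lets goodness on the
  finite set \<open>P\<close> spread to a neighbourhood.\<close>
lemma continuous_Rfun:
  assumes "holder A" "continuous_on UNIV V"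
  shows "continuous_on UNIV (Rfun A V)"
proof -
  have "continuous_on UNIV (V \<circ> shift)"
    by (rule continuous_on_compose[OF continuous_shift continuous_on_subset[OF assms(2)]]) simp
  then show ?thesis
    unfolding Rfun_def using holder_continuous[OF assms(1)] assms(2)
    by (intro continuous_intros) (simp_all add: comp_def)
qed

lemma uniform_positivity_near_finite:
  fixes f :: "seq \<Rightarrow> real"
  assumes f: "continuous_on UNIV f" and P: "finite P" and pos: "\<And>q. q \<in> P \<Longrightarrow> f q > 0"
  shows "\<exists>N \<delta>. \<delta> > 0 \<and> (\<forall>q\<in>P. \<forall>y\<in>cylinder N q. \<delta> \<le> f y)"
proof -
  define \<delta> :: real where "\<delta> = Min (insert 1 (f ` P)) / 2"
  have \<delta>: "\<delta> > 0" using P pos by (auto simp: \<delta>_def)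
  have "\<delta> < f q" if "q \<in> P" for q
  proof -
    have "Min (insert 1 (f ` P)) \<le> f q" using P that by (intro Min_le) auto
    then show ?thesis using pos[OF that] by (simp add: \<delta>_def)
  qed
  moreover have "open (f -` {\<delta><..})"
    using f by (simp add: continuous_on_open_vimage)
  ultimately have "\<forall>q\<in>P. \<exists>N. cylinder N q \<subseteq> f -` {\<delta><..}"
    by (auto simp: open_iff_cylinders)
  then obtain Nq where Nq: "\<And>q. q \<in> P \<Longrightarrow> cylinder (Nq q) q \<subseteq> f -` {\<delta><..}"
    by metis
  define N where "N = Max (insert 0 (Nq ` P))"
  have "cylinder N q \<subseteq> f -` {\<delta><..}" if "q \<in> P" for q
    using cylinder_antimono[of "Nq q" N q] Nq[OF that] P that by (auto simp: N_def)
  with \<delta> show ?thesis by (force intro!: exI[of _ N] exI[of _ \<delta>])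
qed

section \<open>Periodic orbits and their preimages\<close>

lemma periodic_orbit_finite: "periodic_orbit Mo \<Longrightarrow> finite Mo"
  unfolding periodic_orbit_def by (auto simp: setcompr_eq_image)

lemma periodic_orbit_invariant:
  assumes "periodic_orbit Mo" "m \<in> Mo"
  shows "shift m \<in> Mo"
proof -
  obtain p n j where pn: "n \<ge> 1" "(shift ^^ n) p = p" "Mo = {(shift ^^ j) p | j. j < n}"
    and j: "j < n" "m = (shift ^^ j) p"
    using assms unfolding periodic_orbit_def by blast
  show ?thesis
  proof (cases "Suc j < n")
    case False
    then have "Suc j = n" using j by simp
    moreover have "shift m = (shift ^^ Suc j) p" using j by simp
    moreover have "p \<in> Mo" using pn(1,3) by (auto intro!: exI[of _ 0])
    ultimately show ?thesis using pn(2) by simp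
  qed (use pn j in auto)
qed

text \<open>Points of a periodic orbit of period \<open>n\<close> are \<open>n\<close>-periodic sequences, so they are
  determined by their first \<open>n\<close> symbols.\<close>
lemma periodic_orbit_separated:
  assumes "periodic_orbit Mo"
  shows "\<exists>n. \<forall>m\<in>Mo. \<forall>m'\<in>Mo. m' \<in> cylinder n m \<longrightarrow> m' = m"
proof -
  obtain p n where n: "n \<ge> 1" and per: "(shift ^^ n) p = p"
    and Mo: "Mo = {(shift ^^ j) p | j. j < n}"
    using assms unfolding periodic_orbit_def by blast
  have periodic_step: "m (n + i) = m i" if m: "m \<in> Mo" for m i
  proof -
    obtain j where "m = (shift ^^ j) p" using m Mo by auto
    then have "(shift ^^ n) m = m"
      using per by (metis add.commute funpow_add o_apply)
    then have "(shift ^^ n) m i = m i" by simp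
    then show ?thesis by (simp add: iter_shift)
  qed
  have periodic: "m i = m (i mod n)" if "m \<in> Mo" for m i
  proof (induction i rule: less_induct)
    case (less i)
    show ?case
    proof (cases "i < n")
      case False
      then have "m i = m (i - n)" using \<open>m \<in> Mo\<close> periodic_step[of m "i - n"] by simp
      also have "\<dots> = m ((i - n) mod n)" using False n by (intro less.IH) auto
      finally show ?thesis using False by (simp add: le_mod_geq)
    qed simp
  qed
  have "m' = m" if "m \<in> Mo" "m' \<in> Mo" "m' \<in> cylinder n m" for m m'
  proof
    fix i
    have "i mod n < n" using n by simp
    then show "m' i = m i"
      using periodic[OF that(1)] periodic[OF that(2)] that(3) by (simp add: cylinder_def)
  qed
  then show ?thesis by blast
qed

text \<open>Every sequence has exactly two preimages under the shift, so the preimage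
  of a finite set is finite.\<close>
lemma finite_shift_preimage:
  assumes "finite Mo"
  shows "finite {x. shift x \<in> Mo}"
proof (rule finite_subset)
  show "{x. shift x \<in> Mo} \<subseteq> (\<lambda>(b, m). case_nat b m) ` (UNIV \<times> Mo)"
  proof
    fix x assume "x \<in> {x. shift x \<in> Mo}"
    moreover have "x = case_nat (x 0) (shift x)"
      by (rule ext) (simp add: shift_def split: nat.split)
    ultimately show "x \<in> (\<lambda>(b, m). case_nat b m) ` (UNIV \<times> Mo)"
      by (intro rev_image_eqI[of "(x 0, shift x)"]) auto
  qed
qed (use assms in simp)

definition near :: "nat \<Rightarrow> seq set \<Rightarrow> seq set" where
  "near N Mo = (\<Union>m\<in>Mo. cylinder N m)"

text \<open>\<open>near N M\<close> is open and closed, since any two length-\<open>N\<close> cylinders are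
  either equal or disjoint.\<close>
lemma near_clopen: "open (near N Mo)" "closed (near N Mo)"
proof -
  show "open (near N Mo)" unfolding near_def by (intro open_UN ballI open_cylinder)
  have "cylinder N x \<subseteq> - near N Mo" if "x \<notin> near N Mo" for x
    using that by (auto simp: near_def cylinder_def)
  then show "closed (near N Mo)"
    unfolding closed_def open_iff_cylinders by blast
qed

lemma entry_near_preimage:
  assumes "shift y \<in> near N Mo" "y \<notin> near N Mo"
  shows "\<exists>q. q \<notin> Mo \<and> shift q \<in> Mo \<and> y \<in> cylinder (Suc N) q"
proof -
  obtain m where m: "m \<in> Mo" "shift y \<in> cylinder N m"
    using assms(1) by (auto simp: near_def)
  define q where "q = case_nat (y 0) m"
  have y: "y \<in> cylinder (Suc N) q"
    using m(2) by (auto simp: cylinder_def q_def shift_def less_Suc_eq_0_disj)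
  have "shift q = m" by (simp add: q_def shift_def)
  moreover have "q \<notin> Mo"
    using assms(2) cylinder_antimono[of N "Suc N" q] y by (auto simp: near_def)
  ultimately show ?thesis using m(1) y by blast
qed

lemma no_entry_near:
  fixes R :: "seq \<Rightarrow> real"
  assumes R_big: "\<forall>q\<in>{x. x \<notin> Mo \<and> shift x \<in> Mo}. \<forall>y\<in>cylinder K q. \<delta> \<le> R y"
    and K: "K \<le> Suc N" and R_small: "R y < \<delta>" and outside: "y \<notin> near N Mo"
  shows "shift y \<notin> near N Mo"
proof
  assume "shift y \<in> near N Mo"
  from entry_near_preimage[OF this outside] obtain q
    where q: "q \<in> {x. x \<notin> Mo \<and> shift x \<in> Mo}" and y: "y \<in> cylinder (Suc N) q"
    by blast
  have "y \<in> cylinder K q" using y cylinder_antimono[OF K] by blast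
  with bspec[OF R_big q] have "\<delta> \<le> R y" by blast
  with R_small show False by linarith
qed

lemma finite_I_tail_small:
  assumes fin: "Ifun A V w < \<infinity>" and \<delta>: "\<delta> > 0"
  shows "\<exists>J. \<forall>j\<ge>J. Rfun A V ((shift ^^ j) w) < \<delta>"
proof -
  let ?r = "\<lambda>j. max 0 (Rfun A V ((shift ^^ j) w))"
  have "(\<Sum>j. ennreal (?r j)) = Ifun A V w"
    by (simp add: Ifun_def ennreal_max_0)
  then have "summable ?r"
    using fin by (intro summable_suminf_not_top) auto
  then have "?r \<longlonglongrightarrow> 0" by (rule summable_LIMSEQ_zero)
  then have "eventually (\<lambda>j. ?r j < \<delta>) sequentially"
    using \<delta> by (auto simp: order_tendsto_iff)
  then show ?thesis by (auto simp: eventually_sequentially)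
qed

text \<open>If the empirical measures of \<open>w\<close> converge to a probability giving full mass to
  a clopen set \<open>S\<close>, then the orbit of \<open>w\<close> visits \<open>S\<close> infinitely often: otherwise
  the averages of the continuous function \<open>1\<^sub>S\<close> would tend to \<open>0\<close>, not to \<open>1\<close>.\<close>
lemma empirical_recurrence:
  assumes conv: "empirical_converges w \<mu>"
    and \<mu>: "prob_space \<mu>" "sets \<mu> = sets borel"
    and S: "open S" "closed S" and full: "T \<subseteq> S" "emeasure \<mu> T = 1"
  shows "\<exists>j\<ge>j0. (shift ^^ j) w \<in> S"
proof (rule ccontr)
  assume "\<not> ?thesis"
  then have avoid: "\<And>j. j \<ge> j0 \<Longrightarrow> (shift ^^ j) w \<notin> S" by auto
  let ?g = "indicator S :: seq \<Rightarrow> real"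
  have lim: "(\<lambda>m. (\<Sum>j<m. ?g ((shift ^^ j) w)) / real m) \<longlonglongrightarrow> integral\<^sup>L \<mu> ?g"
    using conv continuous_indicator_clopen[OF S] unfolding empirical_converges_def by blast
  have Sm: "S \<in> sets \<mu>" using S(1) \<mu>(2) by simp
  have "emeasure \<mu> S = 1"
    using emeasure_mono[OF full(1) Sm] prob_space.emeasure_le_1[OF \<mu>(1), of S] full(2)
    by simp
  then have int1: "integral\<^sup>L \<mu> ?g = 1"
    using sets_eq_imp_space_eq[OF \<mu>(2)] by (simp add: measure_def)
  have "(\<Sum>j<m. ?g ((shift ^^ j) w)) \<le> real j0" for m
  proof -
    have "(\<Sum>j<m. ?g ((shift ^^ j) w)) = (\<Sum>j<min m j0. ?g ((shift ^^ j) w))"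
      using avoid by (intro sum.mono_neutral_right) auto
    also have "\<dots> \<le> (\<Sum>j<min m j0. 1)" by (intro sum_mono) (simp add: indicator_def)
    finally show ?thesis by simp
  qed
  then have "(\<Sum>j<m. ?g ((shift ^^ j) w)) / real m \<le> real j0 / real m" for m
    by (intro divide_right_mono) auto
  then have "integral\<^sup>L \<mu> ?g \<le> 0"
    by (intro LIMSEQ_le[OF lim lim_const_over_n]) auto
  with int1 show False by simp
qed

lemma always_if_no_entry:
  assumes no_entry: "\<And>k. k \<ge> J \<Longrightarrow> \<not> Q k \<Longrightarrow> \<not> Q (Suc k)"
    and often: "\<And>j0. \<exists>j\<ge>j0. Q j" and "k \<ge> J"
  shows "Q k"
proof (rule ccontr)
  assume "\<not> Q k"
  have "\<not> Q j" if "j \<ge> k" for j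
    using that by (induction j rule: dec_induct) (use \<open>\<not> Q k\<close> \<open>k \<ge> J\<close> no_entry in auto)
  with often[of k] show False by blast
qed

lemma shadowing:
  assumes inv: "\<And>m. m \<in> Mo \<Longrightarrow> shift m \<in> Mo"
    and sep: "\<forall>m\<in>Mo. \<forall>m'\<in>Mo. m' \<in> cylinder n m \<longrightarrow> m' = m"
    and nN: "n < N" and close: "\<And>k. (shift ^^ k) x \<in> near N Mo"
  shows "x \<in> Mo"
proof -
  obtain m0 where m0: "m0 \<in> Mo" "x \<in> cylinder N m0"
    using close[of 0] by (auto simp: near_def)
  have orbit_m0: "(shift ^^ k) m0 \<in> Mo" for k
    by (induction k) (auto simp: m0(1) inv)
  have tracks: "(shift ^^ k) x \<in> cylinder N ((shift ^^ k) m0)" for k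
  proof (induction k)
    case (Suc k)
    obtain m' where m': "m' \<in> Mo" "(shift ^^ Suc k) x \<in> cylinder N m'"
      using close[of "Suc k"] by (auto simp: near_def)
    have "(shift ^^ Suc k) x \<in> cylinder (N - 1) ((shift ^^ Suc k) m0)"
      using shift_cylinder[of _ "N - 1"] Suc.IH nN by simp
    with m'(2) have "m' \<in> cylinder n ((shift ^^ Suc k) m0)"
      using nN by (auto simp: cylinder_def)
    then have "m' = (shift ^^ Suc k) m0" using sep m'(1) orbit_m0 by blast
    with m'(2) show ?case by simp
  qed (use m0 in simp)
  have "x = m0"
  proof
    fix k
    have "0 < N" using nN by simp
    then have "(shift ^^ k) x 0 = (shift ^^ k) m0 0"
      using tracks[of k] unfolding cylinder_def by blast
    then show "x k = m0 k" by (simp add: iter_shift)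
  qed
  with m0(1) show ?thesis by simp
qed

theorem mainTheorem5:
  fixes Astar Vstar :: "seq \<Rightarrow> real" and \<mu> :: "seq measure" and Mo :: "seq set"
    and w :: seq
  assumes hol: "holder Astar"
    and m0: "mval Astar = 0"
    and maxim: "maximizing Astar \<mu>"
    and uniq: "\<And>\<nu>. maximizing Astar \<nu> \<Longrightarrow> \<nu> = \<mu>"
    and orbit: "periodic_orbit Mo"
    and supp: "emeasure \<mu> Mo = 1"
    and Vcont: "continuous_on UNIV Vstar"
    and calib: "calibrated_subaction Astar Vstar"
    and known: "\<And>v. Ifun Astar Vstar v < \<infinity> \<Longrightarrow> empirical_converges v \<mu>"
    and good: "\<And>x. x \<notin> Mo \<Longrightarrow> shift x \<in> Mo \<Longrightarrow> Rfun Astar Vstar x > 0"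
    and fin: "Ifun Astar Vstar w < \<infinity>"
  shows "\<exists>k. (shift ^^ k) w \<in> Mo"
proof -
  let ?R = "Rfun Astar Vstar" and ?P = "{x. x \<notin> Mo \<and> shift x \<in> Mo}"
  obtain n where sep: "\<forall>m\<in>Mo. \<forall>m'\<in>Mo. m' \<in> cylinder n m \<longrightarrow> m' = m"
    using periodic_orbit_separated[OF orbit] by blast
  have "finite ?P"
    using finite_shift_preimage[OF periodic_orbit_finite[OF orbit]] by (rule rev_finite_subset) auto
  moreover have "\<And>q. q \<in> ?P \<Longrightarrow> 0 < ?R q" using good by simp
  ultimately obtain NR \<delta> where \<delta>: "\<delta> > 0"
    and R_big: "\<forall>q\<in>?P. \<forall>y\<in>cylinder NR q. \<delta> \<le> ?R y"
    using uniform_positivity_near_finite[OF continuous_Rfun[OF hol Vcont]] by blast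
  obtain J where R_small: "\<And>j. j \<ge> J \<Longrightarrow> ?R ((shift ^^ j) w) < \<delta>"
    using finite_I_tail_small[OF fin \<delta>] by blast
  define N where "N = max (Suc n) NR"
  have no_entry: "(shift ^^ Suc k) w \<notin> near N Mo"
    if "k \<ge> J" "(shift ^^ k) w \<notin> near N Mo" for k
  proof -
    have "NR \<le> Suc N" by (simp add: N_def)
    from no_entry_near[OF R_big this R_small[OF that(1)] that(2)] show ?thesis by simp
  qed
  have \<mu>: "prob_space \<mu>" "sets \<mu> = sets borel"
    using maxim by (auto simp: maximizing_def invariant_prob_def)
  have "Mo \<subseteq> near N Mo" by (auto simp: near_def cylinder_def)
  then have often: "\<exists>j\<ge>j0. (shift ^^ j) w \<in> near N Mo" for j0
    using empirical_recurrence[OF known[OF fin] \<mu> near_clopen _ supp] by blast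
  have stays_near: "(shift ^^ k) ((shift ^^ J) w) \<in> near N Mo" for k
    using always_if_no_entry[of J "\<lambda>k. (shift ^^ k) w \<in> near N Mo", OF no_entry often,
        of "k + J"]
    by (simp add: funpow_add)
  have "n < N" by (simp add: N_def)
  then have "(shift ^^ J) w \<in> Mo"
    using shadowing[OF periodic_orbit_invariant[OF orbit] sep] stays_near by blast
  then show ?thesis by blast
qed

end
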